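(* Let $I$ be a commutative monoid with identity $1$, and let $\mathrm{Inv}=\mathrm{Map}^l_I\circ\mathrm{Map}^r_I$ as an endofunctor on $\mathrm{bACT}(I)$. For an object $M$ let $\mathrm{ev}_M:\mathrm{Inv}(M)\to M$, $\mathrm{ev}_M(f)=f(1)(1)$. Then the maps $\mathrm{ev}_{\mathrm{Inv}(M)}:\mathrm{Inv}(\mathrm{Inv}(M))\to\mathrm{Inv}(M)$ are bijective $I$-equivariant maps with $I$-equivariant inverses and define a natural isomorphism $\mathrm{Inv}\circ\mathrm{Inv}\Rightarrow\mathrm{Inv}$.
   Context: Let $I$ be a monoid with operation $\otimes$. For a set $X$, $\mathrm{End}_l(X)$ denotes self-maps written on the left with product $f\circ g$ ($g$ first); $\mathrm{End}_r(X)$ denotes self-maps written on the right, $x\mapsto(x)f$, with $(x)(fg)=((x)f)g$. An $I$-set is a set $X$ with a pair $\xi=(\xi_l,\xi_r)$ of monoid homomorphisms $\xi_l:I\to\mathrm{End}_l(X)$, $\xi_r:I\to\mathrm{End}_r(X)$ with $(\xi_l(i)(x))\xi_r(j)=\xi_l(i)((x)\xi_r(j))$; $f:(X,\xi)\to(Y,\eta)$ is $I$-equivariant if $(f(\xi_l(i)(x)))\eta_r(i)=\eta_l(i)(f((x)\xi_r(i)))$ for all $i,x$. An $I$-set is invertible on one side if either $\xi_l(i)$ is bijective for all $i$ or $\xi_r(i)$ is bijective for all $i$; $\mathrm{bACT}(I)$ is the category of $I$-sets that are products (componentwise action) of $I$-sets invertible on one side, with $I$-equivariant maps. For an $I$-set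 $(A,\alpha)$: $\mathrm{Map}^l_I(A)$ is the set of $f:I\to A$ with $(f(j))\alpha_r(i)=\alpha_l(i)(f(j\otimes i))$ for all $i,j$, with action $\theta_l(k)=\mathrm{id}$, $((f)\theta_r(k))(j)=f(k\otimes j)$; $\mathrm{Map}^r_I(A)$ is the set of $f:I\to A$ with $(f(i\otimes j))\alpha_r(i)=\alpha_l(i)(f(j))$ for all $i,j$, with action $(\vartheta_l(k)(f))(i)=f(i\otimes k)$, $\vartheta_r(k)=\mathrm{id}$. Both are functors via $u\mapsto(h\mapsto u\circ h)$. *)

theory Defs
  imports Main "HOL-Library.FuncSet"
begin

text \<open>The monoid I is a type of class comm_monoid_mult: the operation is (*), the unit is 1.
  An I-set is a carrier set with a left action lact and a right action ract
  (ract i x stands for (x) xi_r(i)).\<close>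

record ('a, 'i) iset =
  carr :: "'a set"
  lact :: "'i \<Rightarrow> 'a \<Rightarrow> 'a"
  ract :: "'i \<Rightarrow> 'a \<Rightarrow> 'a"

definition is_iset :: "('a, 'i::monoid_mult) iset \<Rightarrow> bool" where
  "is_iset X \<longleftrightarrow>
     (\<forall>i. \<forall>x\<in>carr X. lact X i x \<in> carr X \<and> ract X i x \<in> carr X) \<and>
     (\<forall>x\<in>carr X. lact X 1 x = x \<and> ract X 1 x = x) \<and>
     (\<forall>i j. \<forall>x\<in>carr X. lact X (i * j) x = lact X i (lact X j x)) \<and>
     (\<forall>i j. \<forall>x\<in>carr X. ract X (i * j) x = ract X j (ract X i x)) \<and>
     (\<forall>i j. \<forall>x\<in>carr X. ract X j (lact X i x) = lact X i (ract X j x))"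

definition equivariant :: "('a, 'i) iset \<Rightarrow> ('b, 'i) iset \<Rightarrow> ('a \<Rightarrow> 'b) \<Rightarrow> bool" where
  "equivariant X Y f \<longleftrightarrow>
     (\<forall>x\<in>carr X. f x \<in> carr Y) \<and>
     (\<forall>i. \<forall>x\<in>carr X. ract Y i (f (lact X i x)) = lact Y i (f (ract X i x)))"

definition one_side_invertible :: "('a, 'i) iset \<Rightarrow> bool" where
  "one_side_invertible X \<longleftrightarrow>
     (\<forall>i. bij_betw (lact X i) (carr X) (carr X)) \<or> (\<forall>i. bij_betw (ract X i) (carr X) (carr X))"

definition prod_iset :: "'k set \<Rightarrow> ('k \<Rightarrow> ('b, 'i) iset) \<Rightarrow> ('k \<Rightarrow> 'b, 'i) iset" where
  "prod_iset K X =
     \<lparr> carr = (\<Pi>\<^sub>E k\<in>K. carr (X k)),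
       lact = (\<lambda>i m. restrict (\<lambda>k. lact (X k) i (m k)) K),
       ract = (\<lambda>i m. restrict (\<lambda>k. ract (X k) i (m k)) K) \<rparr>"

text \<open>Objects of bACT(I): products of I-sets invertible on one side.\<close>
definition bACT_family :: "'k set \<Rightarrow> ('k \<Rightarrow> ('b, 'i::monoid_mult) iset) \<Rightarrow> bool" where
  "bACT_family K X \<longleftrightarrow> (\<forall>k\<in>K. is_iset (X k) \<and> one_side_invertible (X k))"

definition Mapl :: "('a, 'i::monoid_mult) iset \<Rightarrow> ('i \<Rightarrow> 'a, 'i) iset" where
  "Mapl A =
     \<lparr> carr = {f. (\<forall>j. f j \<in> carr A) \<and> (\<forall>i j. ract A i (f j) = lact A i (f (j * i)))},
       lact = (\<lambda>k f. f),
       ract = (\<lambda>k f. (\<lambda>j. f (k * j))) \<rparr>"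

definition Mapr :: "('a, 'i::monoid_mult) iset \<Rightarrow> ('i \<Rightarrow> 'a, 'i) iset" where
  "Mapr A =
     \<lparr> carr = {f. (\<forall>j. f j \<in> carr A) \<and> (\<forall>i j. ract A i (f (i * j)) = lact A i (f j))},
       lact = (\<lambda>k f. (\<lambda>i. f (i * k))),
       ract = (\<lambda>k f. f) \<rparr>"

definition Map_fun :: "('a \<Rightarrow> 'b) \<Rightarrow> ('i \<Rightarrow> 'a) \<Rightarrow> ('i \<Rightarrow> 'b)" where
  "Map_fun u h = u \<circ> h"

definition Inv :: "('a, 'i::monoid_mult) iset \<Rightarrow> ('i \<Rightarrow> 'i \<Rightarrow> 'a, 'i) iset" where
  "Inv A = Mapl (Mapr A)"

definition Inv_fun :: "('a \<Rightarrow> 'b) \<Rightarrow> ('i \<Rightarrow> 'i \<Rightarrow> 'a) \<Rightarrow> ('i \<Rightarrow> 'i \<Rightarrow> 'b)" where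
  "Inv_fun u = Map_fun (Map_fun u)"

definition ev :: "('i::monoid_mult \<Rightarrow> 'i \<Rightarrow> 'a) \<Rightarrow> 'a" where
  "ev f = f 1 1"

end

theory Submission imports Defs begin

text \<open>Unfolding the definitions, an element of \<open>Inv (Inv A)\<close> is a function \<open>G j m l p\<close> of
  four monoid variables, and its invariance conditions together with commutativity give
  \<open>G j m l p = G 1 1 (j * l) (p * m)\<close>. Hence \<open>G\<close> is determined by \<open>ev G = G 1 1\<close>, and
  \<open>f \<mapsto> (\<lambda>j m l p. f (j * l) (p * m))\<close> is an equivariant inverse of \<open>ev\<close>.
  Naturality holds because \<open>ev\<close> only evaluates. None of this uses that \<open>A\<close> is an object of
  \<open>bACT(I)\<close>, or even an \<open>I\<close>-set.\<close>

lemma mem_carr_Inv_iff: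
  "F \<in> carr (Inv A) \<longleftrightarrow>
     (\<forall>l p. F l p \<in> carr A) \<and> (\<forall>i l p. ract A i (F l (i * p)) = lact A i (F l p)) \<and>
     (\<forall>i l p. F l p = F (l * i) (p * i))"
  unfolding Inv_def Mapl_def Mapr_def by (auto simp: fun_eq_iff)

lemma lact_Inv [simp]: "lact (Inv A) i F = F"
  unfolding Inv_def Mapl_def by simp

lemma ract_Inv [simp]: "ract (Inv A) i F = (\<lambda>j. F (i * j))"
  unfolding Inv_def Mapl_def by simp

lemma mem_carr_Inv_Inv_iff:
  "G \<in> carr (Inv (Inv A)) \<longleftrightarrow>
     (\<forall>j m. G j m \<in> carr (Inv A)) \<and> (\<forall>i j m l. G j (i * m) (i * l) = G j m l) \<and>
     (\<forall>i j m. G j m = G (j * i) (m * i))"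
  unfolding Inv_def[of "Inv A"] Mapl_def Mapr_def by (auto simp: fun_eq_iff)

lemma Inv_Inv_eq_ev:
  fixes G :: "'i::comm_monoid_mult \<Rightarrow> 'i \<Rightarrow> 'i \<Rightarrow> 'i \<Rightarrow> 'a"
  assumes "G \<in> carr (Inv (Inv A))"
  shows "G j m l p = G 1 1 (j * l) (p * m)"
proof -
  have shift_outer: "\<And>i j m. G j m = G (j * i) (m * i)"
    and scale_middle: "\<And>i j m l. G j (i * m) (i * l) = G j m l"
    using assms unfolding mem_carr_Inv_Inv_iff by blast+
  have shift_inner: "G j m l p = G j m (l * i) (p * i)" for j m l p i
  proof -
    have "G j m \<in> carr (Inv A)"
      using assms unfolding mem_carr_Inv_Inv_iff by blast
    then show ?thesis
      unfolding mem_carr_Inv_iff by blast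
  qed
  have "G j m l p = G j m (l * m) (p * m)"
    by (rule shift_inner)
  also have "\<dots> = G j (j * m) (j * (l * m)) (p * m)"
    by (simp only: scale_middle)
  also have "\<dots> = G j (m * j) (m * (j * l)) (p * m)"
    by (simp only: ac_simps)
  also have "\<dots> = G j j (j * l) (p * m)"
    by (simp only: scale_middle)
  also have "G j j = G 1 1"
    using shift_outer[of 1 1 j] by simp
  finally show ?thesis .
qed

definition ev_inv :: "('i::comm_monoid_mult \<Rightarrow> 'i \<Rightarrow> 'a) \<Rightarrow> 'i \<Rightarrow> 'i \<Rightarrow> 'i \<Rightarrow> 'i \<Rightarrow> 'a" where
  "ev_inv f = (\<lambda>j m l p. f (j * l) (p * m))"

lemma ev_inv_mem_carr:
  fixes f :: "'i::comm_monoid_mult \<Rightarrow> 'i \<Rightarrow> 'a"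
  assumes "f \<in> carr (Inv A)"
  shows "ev_inv f \<in> carr (Inv (Inv A))"
proof -
  have in_carr: "\<And>l p. f l p \<in> carr A"
    and commute: "\<And>i l p. ract A i (f l (i * p)) = lact A i (f l p)"
    and shift: "\<And>i l p. f l p = f (l * i) (p * i)"
    using assms unfolding mem_carr_Inv_iff by blast+
  show ?thesis
    unfolding mem_carr_Inv_Inv_iff unfolding mem_carr_Inv_iff ev_inv_def
  proof (intro conjI allI)
    fix j m l p
    show "f (j * l) (p * m) \<in> carr A" by (rule in_carr)
  next
    fix j m i l p
    show "ract A i (f (j * l) (i * p * m)) = lact A i (f (j * l) (p * m))"
      using commute[of i "j * l" "p * m"] by (simp add: ac_simps)
  next
    fix j m i l p
    show "f (j * l) (p * m) = f (j * (l * i)) (p * i * m)"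
      using shift[of "j * l" "p * m" i] by (simp add: ac_simps)
  next
    fix i j m l
    show "(\<lambda>p. f (j * (i * l)) (p * (i * m))) = (\<lambda>p. f (j * l) (p * m))"
    proof
      fix p
      show "f (j * (i * l)) (p * (i * m)) = f (j * l) (p * m)"
        using shift[of "j * l" "p * m" i] by (simp add: ac_simps)
    qed
  next
    fix i j m
    show "(\<lambda>l p. f (j * l) (p * m)) = (\<lambda>l p. f (j * i * l) (p * (m * i)))"
    proof (intro ext)
      fix l p
      show "f (j * l) (p * m) = f (j * i * l) (p * (m * i))"
        using shift[of "j * l" "p * m" i] by (simp add: ac_simps)
    qed
  qed
qed

lemma ev_ev_inv [simp]: "ev (ev_inv f) = f"
  by (simp add: ev_def ev_inv_def)

lemma ev_inv_ev: "G \<in> carr (Inv (Inv A)) \<Longrightarrow> ev_inv (ev G) = G"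
  using Inv_Inv_eq_ev[of G A] by (simp add: ev_inv_def ev_def fun_eq_iff ac_simps)

lemma ev_mem_carr: "G \<in> carr (Inv (Inv A)) \<Longrightarrow> ev G \<in> carr (Inv A)"
  unfolding mem_carr_Inv_Inv_iff ev_def by blast

lemma equivariant_ev:
  fixes A :: "('a, 'i::comm_monoid_mult) iset"
  shows "equivariant (Inv (Inv A)) (Inv A) ev"
  unfolding equivariant_def
proof (intro conjI ballI allI)
  fix G assume "G \<in> carr (Inv (Inv A))"
  then show "ev G \<in> carr (Inv A)" by (rule ev_mem_carr)
next
  fix i G assume "G \<in> carr (Inv (Inv A))"
  then show "ract (Inv A) i (ev (lact (Inv (Inv A)) i G)) = lact (Inv A) i (ev (ract (Inv (Inv A)) i G))"
    using Inv_Inv_eq_ev[of G A i 1] by (simp add: ev_def fun_eq_iff)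
qed

lemma equivariant_ev_inv:
  fixes A :: "('a, 'i::comm_monoid_mult) iset"
  shows "equivariant (Inv A) (Inv (Inv A)) ev_inv"
  unfolding equivariant_def
proof (intro conjI ballI allI)
  fix f assume "f \<in> carr (Inv A)"
  then show "ev_inv f \<in> carr (Inv (Inv A))" by (rule ev_inv_mem_carr)
next
  fix i f
  show "ract (Inv (Inv A)) i (ev_inv (lact (Inv A) i f)) = lact (Inv (Inv A)) i (ev_inv (ract (Inv A) i f))"
    by (simp add: ev_inv_def fun_eq_iff ac_simps)
qed

lemma bij_betw_ev:
  fixes A :: "('a, 'i::comm_monoid_mult) iset"
  shows "bij_betw ev (carr (Inv (Inv A))) (carr (Inv A))"
  by (rule bij_betw_byWitness[where f' = ev_inv]) (auto simp: ev_inv_ev ev_mem_carr ev_inv_mem_carr)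

lemma ev_Inv_fun: "ev (Inv_fun (Inv_fun u) F) = Inv_fun u (ev F)"
  by (simp add: ev_def Inv_fun_def Map_fun_def)

theorem mainTheorem10:
  fixes K :: "'k set" and X :: "'k \<Rightarrow> ('b, 'i::comm_monoid_mult) iset"
  assumes "bACT_family K X"
  shows "equivariant (Inv (Inv (prod_iset K X))) (Inv (prod_iset K X)) ev
    \<and> bij_betw ev (carr (Inv (Inv (prod_iset K X)))) (carr (Inv (prod_iset K X)))
    \<and> (\<exists>g. equivariant (Inv (prod_iset K X)) (Inv (Inv (prod_iset K X))) g
           \<and> (\<forall>F\<in>carr (Inv (Inv (prod_iset K X))). g (ev F) = F)
           \<and> (\<forall>f\<in>carr (Inv (prod_iset K X)). ev (g f) = f))
    \<and> (\<forall>(K' :: 'k2 set) (X' :: 'k2 \<Rightarrow> ('c, 'i) iset) (u :: ('k \<Rightarrow> 'b) \<Rightarrow> ('k2 \<Rightarrow> 'c)).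
         bACT_family K' X' \<and> equivariant (prod_iset K X) (prod_iset K' X') u \<longrightarrow>
         (\<forall>F\<in>carr (Inv (Inv (prod_iset K X))).
            ev (Inv_fun (Inv_fun u) F) = Inv_fun u (ev F)))"
proof -
  let ?A = "prod_iset K X"
  have "\<exists>g. equivariant (Inv ?A) (Inv (Inv ?A)) g
           \<and> (\<forall>F\<in>carr (Inv (Inv ?A)). g (ev F) = F) \<and> (\<forall>f\<in>carr (Inv ?A). ev (g f) = f)"
    using equivariant_ev_inv ev_inv_ev by fastforce
  then show ?thesis
    by (simp add: equivariant_ev bij_betw_ev ev_Inv_fun)
qed

end
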